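(* Let $G$ be labeled by an $\mathcal{AL}$ labeling $\langle r,d_1,d_2\rangle$, and let $x$ be a black node that belongs to class $A$ or $B$. Then $\mathit{A\_or\_B}(x)$ returns ``$B$'' if $x$ is in class $B$, and returns ``$A$'' otherwise. The robot is in $x$ when $\mathit{A\_or\_B}(x)$ exits. In the call $\mathit{A\_or\_B}(x)$ the robot needs $O(d_1\log\Delta)$ bits of memory, and the total number of edge traversals is $O(\Delta^{2d_1-1})$.
   Context: $G$ is an undirected connected anonymous graph (loops and multiple edges allowed) of maximum degree $\Delta$ and diameter $D$, with ports $0,\dots,\mathtt{deg}(v)-1$ at each node $v$; the robot sees the degree, the color of the current node and the entry port and moves by choosing exit ports. $\mathcal{AL}$ labeling $\langle r,d_1,d_2\rangle$: root $r$; $d(\cdot,\cdot)$ graph distance; integers $d_1\ge 2$, $d_2$ with $\lfloor d_2/2\rfloor\ge d_1$; $q=d_1+d_2+2$; classes $C=\{v:d(r,v)\bmod q=0\}$, $D=\{v:d(r,v)\bmod q=1\}$, $A=\{v:d(r,v)\bmod q=d_2+1\}$, $B=\{v:d(r,v)\bmod q=d_1+d_2+1\}$; nodes of $A\cup B\cup C\cup D$ are black, others white; it is assumed $D\ge d_1+d_2+1$. The white radius $R_W(v)$ of a node $v$ is $\ell-1$, where $\ell$ is the distance from $v$ to a nearest black node. White local search from $u$ within radius $\ell$: the recursive procedure $\mathit{WLS}(v,k,\mathit{inport})$, called as $\mathit{WLS}(u,\ell,-1)$: if $k=0$ report $v$; otherwise, if $v$ is black and $k\ne\ell$, return; otherwise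 for each port $\mathit{outport}\neq\mathit{inport}$ of $v$ in increasing order, move through it to neighbor $w$, call $\mathit{WLS}(w,k-1,\text{entry port at }w)$, and move back to $v$. Procedure $\mathit{A\_or\_B}(x)$: perform a white local search from $x$ within radius $d_1$; return ``$A$'' if some reported white node has white radius $d_1-1$, and ``$B$'' otherwise. The robot ends at $x$. *)

theory Defs
  imports Complex_Main
begin

text \<open>A graph on the vertex set V (natural numbers as vertex names; any finite
graph is isomorphic to such a one). Node v has ports 0..deg v - 1; leaving v
through port p leads to nbr v p, where the edge is entered through port
back v p. Loops and multiple edges are allowed.\<close>

definition port_graph ::
  "nat set \<Rightarrow> (nat \<Rightarrow> nat) \<Rightarrow> (nat \<Rightarrow> nat \<Rightarrow> nat) \<Rightarrow> (nat \<Rightarrow> nat \<Rightarrow> nat) \<Rightarrow> bool" where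
  "port_graph V deg nbr back \<longleftrightarrow> finite V \<and> V \<noteq> {} \<and>
     (\<forall>v\<in>V. \<forall>p<deg v. nbr v p \<in> V \<and> back v p < deg (nbr v p) \<and>
        nbr (nbr v p) (back v p) = v \<and> back (nbr v p) (back v p) = p)"

fun walk_end :: "(nat \<Rightarrow> nat) \<Rightarrow> (nat \<Rightarrow> nat \<Rightarrow> nat) \<Rightarrow> nat \<Rightarrow> nat list \<Rightarrow> nat option" where
  "walk_end deg nbr u [] = Some u"
| "walk_end deg nbr u (p # ps) = (if p < deg u then walk_end deg nbr (nbr u p) ps else None)"

definition connected_pg :: "nat set \<Rightarrow> (nat \<Rightarrow> nat) \<Rightarrow> (nat \<Rightarrow> nat \<Rightarrow> nat) \<Rightarrow> bool" where
  "connected_pg V deg nbr \<longleftrightarrow> (\<forall>u\<in>V. \<forall>v\<in>V. \<exists>ps. walk_end deg nbr u ps = Some v)"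

definition gdist :: "(nat \<Rightarrow> nat) \<Rightarrow> (nat \<Rightarrow> nat \<Rightarrow> nat) \<Rightarrow> nat \<Rightarrow> nat \<Rightarrow> nat" where
  "gdist deg nbr u v = (LEAST n. \<exists>ps. length ps = n \<and> walk_end deg nbr u ps = Some v)"

definition max_degree :: "nat set \<Rightarrow> (nat \<Rightarrow> nat) \<Rightarrow> nat" where
  "max_degree V deg = Max (deg ` V)"

definition diameter :: "nat set \<Rightarrow> (nat \<Rightarrow> nat) \<Rightarrow> (nat \<Rightarrow> nat \<Rightarrow> nat) \<Rightarrow> nat" where
  "diameter V deg nbr = Max {gdist deg nbr u v | u v. u \<in> V \<and> v \<in> V}"

definition al_q :: "nat \<Rightarrow> nat \<Rightarrow> nat" where "al_q d1 d2 = d1 + d2 + 2"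

definition inC where "inC deg nbr r d1 d2 v \<longleftrightarrow> gdist deg nbr r v mod al_q d1 d2 = 0"
definition inD where "inD deg nbr r d1 d2 v \<longleftrightarrow> gdist deg nbr r v mod al_q d1 d2 = 1"
definition inA where "inA deg nbr r d1 d2 v \<longleftrightarrow> gdist deg nbr r v mod al_q d1 d2 = d2 + 1"
definition inB where "inB deg nbr r d1 d2 v \<longleftrightarrow> gdist deg nbr r v mod al_q d1 d2 = d1 + d2 + 1"

text \<open>The colour seen by the robot: True = black, False = white.\<close>
definition al_black :: "(nat \<Rightarrow> nat) \<Rightarrow> (nat \<Rightarrow> nat \<Rightarrow> nat) \<Rightarrow> nat \<Rightarrow> nat \<Rightarrow> nat \<Rightarrow> nat \<Rightarrow> bool" where
  "al_black deg nbr r d1 d2 v \<longleftrightarrow>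
     inA deg nbr r d1 d2 v \<or> inB deg nbr r d1 d2 v \<or> inC deg nbr r d1 d2 v \<or> inD deg nbr r d1 d2 v"

definition al_labeling ::
  "nat set \<Rightarrow> (nat \<Rightarrow> nat) \<Rightarrow> (nat \<Rightarrow> nat \<Rightarrow> nat) \<Rightarrow> nat \<Rightarrow> nat \<Rightarrow> nat \<Rightarrow> bool" where
  "al_labeling V deg nbr r d1 d2 \<longleftrightarrow> r \<in> V \<and> d1 \<ge> 2 \<and> d2 div 2 \<ge> d1 \<and>
     diameter V deg nbr \<ge> d1 + d2 + 1"

text \<open>A robot is a transition function: given its memory state and the observation
(degree, colour of the current node, entry port or None at the start), it produces a
new memory state and either moves through an exit port or halts with a result.\<close>

datatype 'r action = Move nat | Halt 'r

type_synonym ('s, 'r) robot = "'s \<Rightarrow> nat \<Rightarrow> bool \<Rightarrow> nat option \<Rightarrow> 's \<times> 'r action"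

definition robot_step ::
  "(nat \<Rightarrow> nat) \<Rightarrow> (nat \<Rightarrow> nat \<Rightarrow> nat) \<Rightarrow> (nat \<Rightarrow> nat \<Rightarrow> nat) \<Rightarrow> (nat \<Rightarrow> bool) \<Rightarrow> ('s, 'r) robot
   \<Rightarrow> nat \<times> nat option \<times> 's \<Rightarrow> nat \<times> nat option \<times> 's" where
  "robot_step deg nbr back col T c = (case c of (v, e, s) \<Rightarrow>
     (case T s (deg v) (col v) e of
        (s', Move p) \<Rightarrow> (nbr v p, Some (back v p), s')
      | (s', Halt res) \<Rightarrow> (v, e, s)))"

text \<open>Configuration (position, entry port, memory) after i steps, starting at x with memory s0.\<close>
definition robot_conf ::
  "(nat \<Rightarrow> nat) \<Rightarrow> (nat \<Rightarrow> nat \<Rightarrow> nat) \<Rightarrow> (nat \<Rightarrow> nat \<Rightarrow> nat) \<Rightarrow> (nat \<Rightarrow> bool) \<Rightarrow> ('s, 'r) robot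
   \<Rightarrow> 's \<Rightarrow> nat \<Rightarrow> nat \<Rightarrow> nat \<times> nat option \<times> 's" where
  "robot_conf deg nbr back col T s0 x i = (robot_step deg nbr back col T ^^ i) (x, None, s0)"

definition robot_exec ::
  "(nat \<Rightarrow> nat) \<Rightarrow> (nat \<Rightarrow> nat \<Rightarrow> nat) \<Rightarrow> (nat \<Rightarrow> nat \<Rightarrow> nat) \<Rightarrow> (nat \<Rightarrow> bool) \<Rightarrow> ('s, 'r) robot
   \<Rightarrow> 's \<Rightarrow> nat \<Rightarrow> nat \<Rightarrow> nat \<Rightarrow> 'r \<Rightarrow> bool" where
  "robot_exec deg nbr back col T s0 x n y res \<longleftrightarrow>
     (\<forall>i<n. case robot_conf deg nbr back col T s0 x i of (v, e, s) \<Rightarrow>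
              \<exists>s' p. T s (deg v) (col v) e = (s', Move p) \<and> p < deg v) \<and>
     (case robot_conf deg nbr back col T s0 x n of (v, e, s) \<Rightarrow>
              (\<exists>s'. T s (deg v) (col v) e = (s', Halt res)) \<and> v = y)"

datatype answer = AnsA | AnsB

text \<open>Control modes: WF/WB = white local search, arrived at a new node / arrived back
at a parent; CF/CB = the same for the local search within radius d1-1 used to decide
whether a reported white node has white radius d1-1.\<close>
datatype mode = WF | WB | CF | CB

record rstate =
  rmode :: mode
  wstk :: "nat list"   \<comment> \<open>entry ports along the current white-local-search path (top first)\<close>
  cstk :: "nat list"   \<comment> \<open>entry ports along the current check-search path (top first)\<close>
  found :: bool        \<comment> \<open>some reported white node with white radius d1-1 found\<close>
  blk :: bool          \<comment> \<open>black node found in current check search\<close>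

definition rinit :: rstate where
  "rinit = \<lparr>rmode = WF, wstk = [], cstk = [], found = False, blk = False\<rparr>"

text \<open>Bits of memory: a prefix-free encoding (2 bits mode, 2 flag bits, Elias-gamma-like
codes for the ports with a continuation bit each, and a terminator per list).\<close>
fun bitlen :: "nat \<Rightarrow> nat" where
  "bitlen n = (if n < 2 then 1 else Suc (bitlen (n div 2)))"

definition state_bits :: "rstate \<Rightarrow> nat" where
  "state_bits s = 6 + (\<Sum>p\<leftarrow>wstk s @ cstk s. 2 * bitlen p)"

definition next_port :: "nat \<Rightarrow> nat option \<Rightarrow> nat \<Rightarrow> nat option" where
  "next_port dg ip j =
     (if \<exists>q. j \<le> q \<and> q < dg \<and> ip \<noteq> Some q
      then Some (LEAST q. j \<le> q \<and> q < dg \<and> ip \<noteq> Some q) else None)"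

definition top_port :: "nat list \<Rightarrow> nat option" where
  "top_port st = (case st of [] \<Rightarrow> None | e # _ \<Rightarrow> Some e)"

definition w_ret :: "rstate \<Rightarrow> rstate \<times> answer action" where
  "w_ret s = (case wstk s of
      [] \<Rightarrow> (s, Halt (if found s then AnsA else AnsB))
    | e # rest \<Rightarrow> (s\<lparr>wstk := rest, rmode := WB\<rparr>, Move e))"

definition w_try :: "rstate \<Rightarrow> nat \<Rightarrow> nat \<Rightarrow> rstate \<times> answer action" where
  "w_try s dg j = (case next_port dg (top_port (wstk s)) j of
      Some q \<Rightarrow> (s\<lparr>rmode := WF\<rparr>, Move q)
    | None \<Rightarrow> w_ret s)"

definition c_ret :: "rstate \<Rightarrow> rstate \<times> answer action" where
  "c_ret s = (case cstk s of
      [] \<Rightarrow> w_ret (s\<lparr>found := (found s \<or> \<not> blk s), blk := False\<rparr>)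
    | e # rest \<Rightarrow> (s\<lparr>cstk := rest, rmode := CB\<rparr>, Move e))"

definition c_try :: "rstate \<Rightarrow> nat \<Rightarrow> nat \<Rightarrow> rstate \<times> answer action" where
  "c_try s dg j = (case next_port dg (top_port (cstk s)) j of
      Some q \<Rightarrow> (s\<lparr>rmode := CF\<rparr>, Move q)
    | None \<Rightarrow> c_ret s)"

definition c_node :: "nat \<Rightarrow> rstate \<Rightarrow> nat \<Rightarrow> bool \<Rightarrow> rstate \<times> answer action" where
  "c_node d1 s dg bl =
     (if bl then c_ret (s\<lparr>blk := True\<rparr>)
      else if length (cstk s) = d1 - 1 then c_ret s
      else c_try s dg 0)"

definition push :: "nat option \<Rightarrow> nat list \<Rightarrow> nat list" where
  "push e st = (case e of None \<Rightarrow> st | Some p \<Rightarrow> p # st)"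

definition aob_robot :: "nat \<Rightarrow> (rstate, answer) robot" where
  "aob_robot d1 s dg bl e = (case rmode s of
      WF \<Rightarrow> (let s1 = s\<lparr>wstk := push e (wstk s)\<rparr>; k = length (wstk s1) in
              if k = d1 then
                (if bl then w_ret s1 else c_node d1 (s1\<lparr>cstk := [], blk := False\<rparr>) dg bl)
              else if bl \<and> k \<noteq> 0 then w_ret s1
              else w_try s1 dg 0)
    | WB \<Rightarrow> w_try s dg (case e of None \<Rightarrow> 0 | Some q \<Rightarrow> Suc q)
    | CF \<Rightarrow> c_node d1 (s\<lparr>cstk := push e (cstk s)\<rparr>) dg bl
    | CB \<Rightarrow> c_try s dg (case e of None \<Rightarrow> 0 | Some q \<Rightarrow> Suc q))"

end

(*
  The robot realises A_or_B as a depth-first white local search of depth d1 in which every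
  reported white node runs a second local search of depth d1 - 1 looking for a black node.
  Both searches store only the stack of entry ports of the current path, at most d1 ports of
  O(log \<Delta>) bits each, and explore at most \<Delta>^d1 resp. \<Delta>^(d1-1) non-backtracking walks,
  which gives O(\<Delta>^(2 d1 - 1)) moves.

  For correctness let L = d(r, x). If x is in A, the 2 d1 - 1 distance layers just below L lie
  between the D layer and the A layer (as d2 \<ge> 2 d1) and are therefore white; following a
  geodesic towards r for d1 steps reaches a white node whose whole (d1 - 1)-ball is white.
  If x is in B, the layers L - d1, L and L + 1 are black, so a white walk of length d1 from x
  stays strictly between the layers L - d1 and L and ends within distance d1 - 1 of the black
  layer L - d1: no reported node has white radius d1 - 1.
*)

theory Submission
  imports Defs
begin

declare bitlen.simps[simp del]

section \<open>Walks and distances\<close>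

lemma walk_end_append:
  "walk_end deg nbr u (ps @ qs) =
     (case walk_end deg nbr u ps of None \<Rightarrow> None | Some w \<Rightarrow> walk_end deg nbr w qs)"
  by (induction ps arbitrary: u) auto

locale connected_port_graph =
  fixes V :: "nat set" and deg :: "nat \<Rightarrow> nat" and nbr bk :: "nat \<Rightarrow> nat \<Rightarrow> nat"
  assumes port_graph: "port_graph V deg nbr bk" and connected: "connected_pg V deg nbr"
begin

abbreviation walk where "walk \<equiv> walk_end deg nbr"
abbreviation \<delta> where "\<delta> \<equiv> gdist deg nbr"

lemma port_graph_edge:
  "v \<in> V \<Longrightarrow> p < deg v \<Longrightarrow> nbr v p \<in> V \<and> bk v p < deg (nbr v p) \<and>
     nbr (nbr v p) (bk v p) = v \<and> bk (nbr v p) (bk v p) = p"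
  using port_graph unfolding port_graph_def by blast

lemma walk_in_V: "v \<in> V \<Longrightarrow> walk v ps = Some z \<Longrightarrow> z \<in> V"
  by (induction ps arbitrary: v) (auto split: if_splits dest: port_graph_edge)

lemma walk_reverse:
  "v \<in> V \<Longrightarrow> walk v ps = Some w \<Longrightarrow> \<exists>qs. length qs = length ps \<and> walk w qs = Some v"
proof (induction ps arbitrary: v)
  case (Cons p ps)
  then have p: "p < deg v" and w: "walk (nbr v p) ps = Some w" by (auto split: if_splits)
  note e = port_graph_edge[OF Cons.prems(1) p]
  obtain qs where "length qs = length ps" "walk w qs = Some (nbr v p)"
    using Cons.IH e w by blast
  then show ?case using e by (intro exI[of _ "qs @ [bk v p]"]) (simp add: walk_end_append)
qed simp

lemma dist_le_length: "walk u ps = Some v \<Longrightarrow> \<delta> u v \<le> length ps"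
  unfolding gdist_def by (rule Least_le) auto

definition geodesic :: "nat \<Rightarrow> nat list \<Rightarrow> nat \<Rightarrow> bool" where
  "geodesic u ps v \<longleftrightarrow> walk u ps = Some v \<and> length ps = \<delta> u v"

lemma geodesic_of_walk: "walk u ps = Some v \<Longrightarrow> \<exists>qs. geodesic u qs v"
  unfolding gdist_def geodesic_def
  using LeastI[of "\<lambda>n. \<exists>ps. length ps = n \<and> walk u ps = Some v" "length ps"] by auto

lemma geodesic_exists: "u \<in> V \<Longrightarrow> v \<in> V \<Longrightarrow> \<exists>ps. geodesic u ps v"
  using connected geodesic_of_walk unfolding connected_pg_def by blast

lemma dist_sym: "u \<in> V \<Longrightarrow> v \<in> V \<Longrightarrow> \<delta> v u = \<delta> u v"
proof -
  have le: "\<delta> b a \<le> \<delta> a b" if a: "a \<in> V" and b: "b \<in> V" for a b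
  proof -
    obtain ps where "geodesic a ps b" using geodesic_exists a b by blast
    then obtain qs where "length qs = \<delta> a b" "walk b qs = Some a"
      using walk_reverse a unfolding geodesic_def by metis
    then show ?thesis using dist_le_length by metis
  qed
  assume "u \<in> V" "v \<in> V"
  then show ?thesis using le by (meson antisym)
qed

lemma dist_triangle: "u \<in> V \<Longrightarrow> v \<in> V \<Longrightarrow> w \<in> V \<Longrightarrow> \<delta> u w \<le> \<delta> u v + \<delta> v w"
proof -
  assume "u \<in> V" "v \<in> V" "w \<in> V"
  then obtain ps qs where "geodesic u ps v" "geodesic v qs w" using geodesic_exists by blast
  then have "walk u (ps @ qs) = Some w" and "length (ps @ qs) = \<delta> u v + \<delta> v w"
    unfolding geodesic_def by (simp_all add: walk_end_append)
  then show ?thesis using dist_le_length by metis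
qed

lemma dist_along_walk:
  assumes "r \<in> V" "w \<in> V" "walk w ps = Some z"
  shows "\<delta> r z \<le> \<delta> r w + length ps" "\<delta> r w \<le> \<delta> r z + length ps"
proof -
  have z: "z \<in> V" using walk_in_V assms(2,3) .
  have "\<delta> w z \<le> length ps" "\<delta> z w = \<delta> w z" using dist_le_length dist_sym assms z by auto
  then show "\<delta> r z \<le> \<delta> r w + length ps" "\<delta> r w \<le> \<delta> r z + length ps"
    using dist_triangle[OF assms(1,2) z] dist_triangle[OF assms(1) z assms(2)] by linarith+
qed

lemma geodesic_Cons:
  assumes "geodesic v (p # ps) z"
  shows "p < deg v \<and> geodesic (nbr v p) ps z"
proof -
  have p: "p < deg v" and w: "walk (nbr v p) ps = Some z"
    using assms unfolding geodesic_def by (auto split: if_splits)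
  obtain qs where qs: "geodesic (nbr v p) qs z" using geodesic_of_walk[OF w] by blast
  then have "walk v (p # qs) = Some z" using p unfolding geodesic_def by simp
  then have "\<delta> v z \<le> Suc (\<delta> (nbr v p) z)" using dist_le_length qs unfolding geodesic_def by fastforce
  then show ?thesis using dist_le_length[OF w] assms p w unfolding geodesic_def by simp
qed

lemma geodesic_take:
  "v \<in> V \<Longrightarrow> geodesic v ps z \<Longrightarrow> j \<le> length ps \<Longrightarrow>
     \<exists>y\<in>V. walk v (take j ps) = Some y \<and> geodesic y (drop j ps) z"
proof (induction j arbitrary: v ps)
  case (Suc j)
  then obtain p ps' where ps: "ps = p # ps'" by (cases ps) auto
  with Suc.prems geodesic_Cons have "p < deg v" "geodesic (nbr v p) ps' z" by blast+
  then show ?case using Suc ps port_graph_edge by auto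
qed simp

fun nonbacktracking :: "nat \<Rightarrow> nat option \<Rightarrow> nat list \<Rightarrow> bool" where
  "nonbacktracking v ip [] = True"
| "nonbacktracking v ip (p # ps) =
     (p < deg v \<and> ip \<noteq> Some p \<and> nonbacktracking (nbr v p) (Some (bk v p)) ps)"

lemma nonbacktracking_take: "nonbacktracking v ip ps \<Longrightarrow> nonbacktracking v ip (take j ps)"
  by (induction ps arbitrary: v ip j) (auto simp: take_Cons split: nat.splits)

text \<open>A geodesic never returns through the port it just came in by, since that would shorten it by two.\<close>
lemma geodesic_nonbacktracking:
  "v \<in> V \<Longrightarrow> geodesic v ps z \<Longrightarrow> (ps \<noteq> [] \<longrightarrow> ip \<noteq> Some (hd ps)) \<Longrightarrow> nonbacktracking v ip ps"
proof (induction ps arbitrary: v ip)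
  case (Cons p ps)
  from geodesic_Cons[OF Cons.prems(2)] have p: "p < deg v" and g: "geodesic (nbr v p) ps z" by auto
  note e = port_graph_edge[OF Cons.prems(1) p]
  have "bk v p \<noteq> hd ps" if "ps \<noteq> []"
  proof
    assume "bk v p = hd ps"
    then have "walk v (tl ps) = Some z"
      using g e that unfolding geodesic_def by (cases ps) (auto split: if_splits)
    then show False using dist_le_length Cons.prems(2) that unfolding geodesic_def by fastforce
  qed
  then show ?case using Cons.IH[OF _ g] e p Cons.prems(3) by auto
qed simp

end

definition free_ports :: "nat \<Rightarrow> nat option \<Rightarrow> nat \<Rightarrow> nat set" where
  "free_ports dg ip j = {q. j \<le> q \<and> q < dg \<and> ip \<noteq> Some q}"

lemma finite_free_ports[simp]: "finite (free_ports dg ip j)"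
  unfolding free_ports_def by (rule finite_subset[of _ "{..<dg}"]) auto

lemma next_port_None: "next_port dg ip j = None \<Longrightarrow> free_ports dg ip j = {}"
  unfolding next_port_def free_ports_def by (auto split: if_splits)

lemma next_port_Some:
  assumes "next_port dg ip j = Some q"
  shows "q \<in> free_ports dg ip j" "free_ports dg ip j = insert q (free_ports dg ip (Suc q))"
    "q \<notin> free_ports dg ip (Suc q)"
proof -
  have ex: "\<exists>q. j \<le> q \<and> q < dg \<and> ip \<noteq> Some q"
    and q: "q = (LEAST q. j \<le> q \<and> q < dg \<and> ip \<noteq> Some q)"
    using assms unfolding next_port_def by (auto split: if_splits)
  show "q \<in> free_ports dg ip j" using LeastI_ex[OF ex] q unfolding free_ports_def by simp
  moreover have "q \<le> q'" if "q' \<in> free_ports dg ip j" for q'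
    using that unfolding q free_ports_def by (auto intro: Least_le)
  ultimately show "free_ports dg ip j = insert q (free_ports dg ip (Suc q))"
    unfolding free_ports_def by force
  show "q \<notin> free_ports dg ip (Suc q)" unfolding free_ports_def by simp
qed

abbreviation rst :: "mode \<Rightarrow> nat list \<Rightarrow> nat list \<Rightarrow> bool \<Rightarrow> bool \<Rightarrow> rstate" where
  "rst M ws cs f b \<equiv> \<lparr>rmode = M, wstk = ws, cstk = cs, found = f, blk = b\<rparr>"

lemma c_ret_Cons[simp]: "c_ret (rst M ws (e # cs) f b) = (rst CB ws cs f b, Move e)"
  by (simp add: c_ret_def)

lemma c_ret_Nil[simp]: "c_ret (rst M ws [] f b) = w_ret (rst M ws [] (f \<or> \<not> b) False)"
  by (simp add: c_ret_def)

lemma w_ret_Cons[simp]: "w_ret (rst M (e # ws) cs f b) = (rst WB ws cs f b, Move e)"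
  by (simp add: w_ret_def)

lemma w_ret_Nil[simp]: "w_ret (rst M [] cs f b) = (rst M [] cs f b, Halt (if f then AnsA else AnsB))"
  by (simp add: w_ret_def)

lemma c_try_None:
  "next_port dg (top_port cs) j = None \<Longrightarrow> c_try (rst M ws cs f b) dg j = c_ret (rst M ws cs f b)"
  by (simp add: c_try_def)

lemma c_try_Some:
  "next_port dg (top_port cs) j = Some q \<Longrightarrow> c_try (rst M ws cs f b) dg j = (rst CF ws cs f b, Move q)"
  by (simp add: c_try_def)

lemma w_try_None:
  "next_port dg (top_port ws) j = None \<Longrightarrow> w_try (rst M ws cs f b) dg j = w_ret (rst M ws cs f b)"
  by (simp add: w_try_def)

lemma w_try_Some:
  "next_port dg (top_port ws) j = Some q \<Longrightarrow> w_try (rst M ws cs f b) dg j = (rst WF ws cs f b, Move q)"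
  by (simp add: w_try_def)

lemma bitlen_mono: "a \<le> b \<Longrightarrow> bitlen a \<le> bitlen b"
proof (induction b arbitrary: a rule: less_induct)
  case (less b)
  then show ?case
    by (cases "a < 2"; cases "b < 2") (auto simp: bitlen.simps[of a] bitlen.simps[of b] div_le_mono)
qed

type_synonym config = "nat \<times> nat option \<times> rstate"

locale A_or_B_robot = connected_port_graph V deg nbr bk for V deg nbr bk +
  fixes black :: "nat \<Rightarrow> bool" and d1 Dl :: nat
  assumes two_le_d1: "2 \<le> d1" and deg_le: "v \<in> V \<Longrightarrow> deg v \<le> Dl"
begin

definition act :: "config \<Rightarrow> rstate \<times> answer action" where
  "act c = (case c of (v, e, s) \<Rightarrow> aob_robot d1 s (deg v) (black v) e)"

definition legal :: "config \<Rightarrow> bool" where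
  "legal c = (case c of (v, e, s) \<Rightarrow> \<exists>s' p. act c = (s', Move p) \<and> p < deg v)"

abbreviation step where "step \<equiv> robot_step deg nbr bk black (aob_robot d1)"

definition mem_bound :: nat where "mem_bound = 6 + 4 * d1 * bitlen Dl"

text \<open>The memory of the starting configuration is not constrained, so that runs compose.\<close>
definition run :: "config \<Rightarrow> nat \<Rightarrow> config \<Rightarrow> bool" where
  "run c m c' \<longleftrightarrow> (step ^^ m) c = c' \<and> (\<forall>i<m. legal ((step ^^ i) c)) \<and>
     (\<forall>i. 0 < i \<and> i \<le> m \<longrightarrow> state_bits (snd (snd ((step ^^ i) c))) \<le> mem_bound)"

lemma run_0: "run c 0 c"
  unfolding run_def by simp

lemma run_trans:
  assumes r1: "run c m1 c1" and r2: "run c1 m2 c2"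
  shows "run c (m1 + m2) c2"
proof -
  have shift: "(step ^^ (m1 + k)) c = (step ^^ k) c1" for k
    using r1 unfolding run_def by (metis add.commute comp_apply funpow_add)
  have split: "i < m1 \<or> (\<exists>k. i = m1 + k \<and> k < m2)" if "i < m1 + m2" for i
    using that by presburger
  have split': "i \<le> m1 \<or> (\<exists>k. i = m1 + k \<and> 0 < k \<and> k \<le> m2)" if "i \<le> m1 + m2" for i
    using that by presburger
  show ?thesis
    unfolding run_def
  proof (intro conjI allI impI)
    show "(step ^^ (m1 + m2)) c = c2" using shift r2 unfolding run_def by simp
    show "legal ((step ^^ i) c)" if "i < m1 + m2" for i
      using split[OF that] r1 r2 shift unfolding run_def by auto
    show "state_bits (snd (snd ((step ^^ i) c))) \<le> mem_bound" if "0 < i \<and> i \<le> m1 + m2" for i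
      using split'[of i] that r1 r2 shift unfolding run_def by auto
  qed
qed

lemma run_move:
  assumes "act (v, e, s) = (s', Move p)" "p < deg v" "state_bits s' \<le> mem_bound"
  shows "run (v, e, s) 1 (nbr v p, Some (bk v p), s')"
proof -
  have "step (v, e, s) = (nbr v p, Some (bk v p), s')"
    using assms(1) by (simp add: robot_step_def act_def)
  then show ?thesis using assms unfolding run_def legal_def by (auto simp: le_Suc_eq)
qed

lemma state_bits_le_mem_bound:
  assumes "length ws \<le> d1" "length cs \<le> d1" "\<forall>p\<in>set (ws @ cs). p \<le> Dl"
  shows "state_bits (rst M ws cs f b) \<le> mem_bound"
proof -
  have "(\<Sum>p\<leftarrow>ws @ cs. 2 * bitlen p) \<le> (\<Sum>p\<leftarrow>ws @ cs. 2 * bitlen Dl)"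
    by (rule sum_list_mono) (use assms(3) bitlen_mono in auto)
  also have "\<dots> = length (ws @ cs) * (2 * bitlen Dl)" by (simp add: sum_list_triv algebra_simps)
  also have "\<dots> \<le> (2 * d1) * (2 * bitlen Dl)" using assms(1,2) by (intro mult_right_mono) auto
  finally show ?thesis unfolding state_bits_def mem_bound_def by simp
qed

section \<open>The two local searches\<close>

text \<open>Outcome and number of moves of the check search (the local search within radius d1 - 1
  around a reported node), by recursion on the remaining radius.\<close>
fun black_within :: "nat \<Rightarrow> nat \<Rightarrow> nat option \<Rightarrow> bool" where
  "black_within 0 u ip = black u"
| "black_within (Suc k) u ip =
     (black u \<or> (\<exists>q\<in>free_ports (deg u) ip 0. black_within k (nbr u q) (Some (bk u q))))"

fun check_moves :: "nat \<Rightarrow> nat \<Rightarrow> nat option \<Rightarrow> nat" where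
  "check_moves 0 u ip = 0"
| "check_moves (Suc k) u ip = (if black u then 0
     else (\<Sum>q\<in>free_ports (deg u) ip 0. 2 + check_moves k (nbr u q) (Some (bk u q))))"

definition check_search_spec :: "nat \<Rightarrow> bool" where
  "check_search_spec k \<longleftrightarrow> (\<forall>u c M ws cs f b. u \<in> V \<longrightarrow> fst c = u \<longrightarrow>
     act c = c_node d1 (rst M ws cs f b) (deg u) (black u) \<longrightarrow>
     length cs + k = d1 - 1 \<longrightarrow> length ws \<le> d1 \<longrightarrow> (\<forall>p\<in>set (ws @ cs). p \<le> Dl) \<longrightarrow>
     (\<exists>c' M'. run c (check_moves k u (top_port cs)) c' \<and> fst c' = u \<and>
        act c' = c_ret (rst M' ws cs f (b \<or> black_within k u (top_port cs)))))"

lemma check_child_round_trip: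
  assumes spec: "check_search_spec k" and u: "u \<in> V" and len: "length cs + Suc k = d1 - 1"
    and lw: "length ws \<le> d1" and ports: "\<forall>p\<in>set (ws @ cs). p \<le> Dl"
    and c: "fst c = u" and a: "act c = c_try (rst M ws cs f b) (deg u) j"
    and q: "next_port (deg u) (top_port cs) j = Some q"
  shows "\<exists>c'. run c (2 + check_moves k (nbr u q) (Some (bk u q))) c' \<and> fst c' = u \<and>
     act c' = c_try (rst CB ws cs f (b \<or> black_within k (nbr u q) (Some (bk u q)))) (deg u) (Suc q)"
proof -
  let ?w = "nbr u q" and ?e = "bk u q"
  let ?b = "b \<or> black_within k ?w (Some ?e)"
  have qd: "q < deg u" using next_port_Some(1)[OF q] by (simp add: free_ports_def)
  note e = port_graph_edge[OF u qd]
  obtain e0 s0 where c0: "c = (u, e0, s0)" using c by (cases c) auto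
  have "act c = (rst CF ws cs f b, Move q)" using a c_try_Some[OF q] by simp
  then have down: "run c 1 (?w, Some ?e, rst CF ws cs f b)"
    using run_move qd state_bits_le_mem_bound len lw ports unfolding c0 by simp
  have a1: "act (?w, Some ?e, rst CF ws cs f b) = c_node d1 (rst CF ws (?e # cs) f b) (deg ?w) (black ?w)"
    by (simp add: act_def aob_robot_def push_def)
  have ports': "\<forall>p\<in>set (ws @ ?e # cs). p \<le> Dl" using ports e deg_le[of ?w] by auto
  have len': "length (?e # cs) + k = d1 - 1" and tp: "top_port (?e # cs) = Some ?e"
    using len by (simp_all add: top_port_def)
  obtain c2 M2 where sub: "run (?w, Some ?e, rst CF ws cs f b) (check_moves k ?w (Some ?e)) c2"
    "fst c2 = ?w" "act c2 = c_ret (rst M2 ws (?e # cs) f ?b)"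
    using spec[unfolded check_search_spec_def, rule_format, of ?w "(?w, Some ?e, rst CF ws cs f b)",
        OF conjunct1[OF e] fst_conv a1 len' lw ports'[rule_format], unfolded tp] by blast
  obtain e2 s2 where c2: "c2 = (?w, e2, s2)" using sub(2) by (cases c2) auto
  have "act (?w, e2, s2) = (rst CB ws cs f ?b, Move ?e)" using sub(3) c2 by simp
  from run_move[OF this] have up: "run c2 1 (u, Some q, rst CB ws cs f ?b)"
    using e state_bits_le_mem_bound len lw ports unfolding c2 by simp
  have "act (u, Some q, rst CB ws cs f ?b) = c_try (rst CB ws cs f ?b) (deg u) (Suc q)"
    by (simp add: act_def aob_robot_def)
  then show ?thesis using run_trans[OF run_trans[OF down sub(1)] up] by fastforce
qed

lemma check_loop:
  assumes spec: "check_search_spec k" and u: "u \<in> V" and len: "length cs + Suc k = d1 - 1"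
    and lw: "length ws \<le> d1" and ports: "\<forall>p\<in>set (ws @ cs). p \<le> Dl"
  shows "n = deg u - j \<Longrightarrow> fst c = u \<Longrightarrow> act c = c_try (rst M ws cs f b) (deg u) j \<Longrightarrow>
   \<exists>c' M'. run c (\<Sum>q\<in>free_ports (deg u) (top_port cs) j. 2 + check_moves k (nbr u q) (Some (bk u q))) c' \<and>
     fst c' = u \<and> act c' = c_ret (rst M' ws cs f
       (b \<or> (\<exists>q\<in>free_ports (deg u) (top_port cs) j. black_within k (nbr u q) (Some (bk u q)))))"
proof (induction n arbitrary: j c M b rule: less_induct)
  case (less n)
  show ?case
  proof (cases "next_port (deg u) (top_port cs) j")
    case None
    then have "act c = c_ret (rst M ws cs f b)" using less.prems(3) c_try_None by simp
    then show ?thesis using less.prems(2) next_port_None[OF None] run_0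
      by (intro exI[of _ c] exI[of _ M]) simp
  next
    case (Some q)
    note q = next_port_Some[OF Some]
    obtain c1 where c1: "run c (2 + check_moves k (nbr u q) (Some (bk u q))) c1" "fst c1 = u"
      "act c1 = c_try (rst CB ws cs f (b \<or> black_within k (nbr u q) (Some (bk u q)))) (deg u) (Suc q)"
      using check_child_round_trip[OF assms less.prems(2,3) Some] by blast
    have "deg u - Suc q < n" using less.prems(1) q(1) by (simp add: free_ports_def, linarith)
    from less.IH[OF this refl c1(2,3)] obtain c' M' where rest:
      "run c1 (\<Sum>q'\<in>free_ports (deg u) (top_port cs) (Suc q). 2 + check_moves k (nbr u q') (Some (bk u q'))) c'"
      "fst c' = u" "act c' = c_ret (rst M' ws cs f ((b \<or> black_within k (nbr u q) (Some (bk u q))) \<or>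
         (\<exists>q'\<in>free_ports (deg u) (top_port cs) (Suc q). black_within k (nbr u q') (Some (bk u q')))))"
      by blast
    have sum_eq: "(\<Sum>q'\<in>free_ports (deg u) (top_port cs) j. 2 + check_moves k (nbr u q') (Some (bk u q'))) =
      (2 + check_moves k (nbr u q) (Some (bk u q))) +
      (\<Sum>q'\<in>free_ports (deg u) (top_port cs) (Suc q). 2 + check_moves k (nbr u q') (Some (bk u q')))"
      using q(2,3) by simp
    have found_eq: "((b \<or> black_within k (nbr u q) (Some (bk u q))) \<or>
         (\<exists>q'\<in>free_ports (deg u) (top_port cs) (Suc q). black_within k (nbr u q') (Some (bk u q')))) =
      (b \<or> (\<exists>q'\<in>free_ports (deg u) (top_port cs) j. black_within k (nbr u q') (Some (bk u q'))))"
      using q(2) by auto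
    show ?thesis
      unfolding sum_eq found_eq[symmetric] using run_trans[OF c1(1) rest(1)] rest(2,3) by blast
  qed
qed

lemma check_search: "check_search_spec k"
proof (induction k)
  case 0
  show ?case
    unfolding check_search_spec_def by (auto simp: c_node_def intro: run_0)
next
  case (Suc k)
  show ?case unfolding check_search_spec_def
  proof (intro allI impI)
    fix u c M ws cs f b
    assume u: "u \<in> V" and c: "fst c = u" and a: "act c = c_node d1 (rst M ws cs f b) (deg u) (black u)"
      and len: "length cs + Suc k = d1 - 1" and lw: "length ws \<le> d1"
      and ports: "\<forall>p\<in>set (ws @ cs). p \<le> Dl"
    show "\<exists>c' M'. run c (check_moves (Suc k) u (top_port cs)) c' \<and> fst c' = u \<and>
        act c' = c_ret (rst M' ws cs f (b \<or> black_within (Suc k) u (top_port cs)))"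
    proof (cases "black u")
      case True
      then show ?thesis using a c run_0 by (intro exI[of _ c] exI[of _ M]) (auto simp: c_node_def)
    next
      case False
      then have "act c = c_try (rst M ws cs f b) (deg u) 0" using a len by (simp add: c_node_def)
      then show ?thesis using check_loop[OF Suc u len lw ports refl c] False by simp
    qed
  qed
qed

text \<open>The same for the white local search within radius d1 from x: found_white records whether
  some reported white node passed its check search, i.e. has white radius at least d1-1.\<close>
fun found_white :: "nat \<Rightarrow> nat \<Rightarrow> nat option \<Rightarrow> bool" where
  "found_white 0 v ip = (\<not> black v \<and> \<not> black_within (d1 - 1) v None)"
| "found_white (Suc k) v ip = (if black v \<and> ip \<noteq> None then False
     else \<exists>q\<in>free_ports (deg v) ip 0. found_white k (nbr v q) (Some (bk v q)))"

fun search_moves :: "nat \<Rightarrow> nat \<Rightarrow> nat option \<Rightarrow> nat" where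
  "search_moves 0 v ip = (if black v then 0 else check_moves (d1 - 1) v None)"
| "search_moves (Suc k) v ip = (if black v \<and> ip \<noteq> None then 0
     else (\<Sum>q\<in>free_ports (deg v) ip 0. 2 + search_moves k (nbr v q) (Some (bk v q))))"

definition white_search_spec :: "nat \<Rightarrow> bool" where
  "white_search_spec k \<longleftrightarrow> (\<forall>v ip ws f. v \<in> V \<longrightarrow> length (push ip ws) + k = d1 \<longrightarrow>
     (ip = None \<longrightarrow> ws = []) \<longrightarrow> (\<forall>p\<in>set ws. p \<le> Dl) \<longrightarrow> (\<forall>p. ip = Some p \<longrightarrow> p < deg v) \<longrightarrow>
     (\<exists>c' M'. run (v, ip, rst WF ws [] f False) (search_moves k v ip) c' \<and> fst c' = v \<and>
        act c' = w_ret (rst M' (push ip ws) [] (f \<or> found_white k v ip) False)))"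

lemma white_child_round_trip:
  assumes spec: "white_search_spec k" and v: "v \<in> V" and len: "length ws + Suc k = d1"
    and ports: "\<forall>p\<in>set ws. p \<le> Dl"
    and c: "fst c = v" and a: "act c = w_try (rst M ws [] f False) (deg v) j"
    and q: "next_port (deg v) (top_port ws) j = Some q"
  shows "\<exists>c'. run c (2 + search_moves k (nbr v q) (Some (bk v q))) c' \<and> fst c' = v \<and>
     act c' = w_try (rst WB ws [] (f \<or> found_white k (nbr v q) (Some (bk v q))) False) (deg v) (Suc q)"
proof -
  let ?w = "nbr v q" and ?e = "bk v q"
  let ?f = "f \<or> found_white k ?w (Some ?e)"
  have qd: "q < deg v" using next_port_Some(1)[OF q] by (simp add: free_ports_def)
  note e = port_graph_edge[OF v qd]
  obtain e0 s0 where c0: "c = (v, e0, s0)" using c by (cases c) auto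
  have "act c = (rst WF ws [] f False, Move q)" using a w_try_Some[OF q] by simp
  then have down: "run c 1 (?w, Some ?e, rst WF ws [] f False)"
    using run_move qd state_bits_le_mem_bound len ports unfolding c0 by simp
  have "\<exists>c' M'. run (?w, Some ?e, rst WF ws [] f False) (search_moves k ?w (Some ?e)) c' \<and>
      fst c' = ?w \<and> act c' = w_ret (rst M' (push (Some ?e) ws) [] ?f False)"
    by (rule spec[unfolded white_search_spec_def, rule_format]) (use e len ports in \<open>simp_all add: push_def\<close>)
  then obtain c2 M2 where sub: "run (?w, Some ?e, rst WF ws [] f False) (search_moves k ?w (Some ?e)) c2"
    "fst c2 = ?w" "act c2 = w_ret (rst M2 (?e # ws) [] ?f False)"
    unfolding push_def by auto
  obtain e2 s2 where c2: "c2 = (?w, e2, s2)" using sub(2) by (cases c2) auto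
  have "act (?w, e2, s2) = (rst WB ws [] ?f False, Move ?e)" using sub(3) c2 by simp
  from run_move[OF this] have up: "run c2 1 (v, Some q, rst WB ws [] ?f False)"
    using e state_bits_le_mem_bound len ports unfolding c2 by simp
  have "act (v, Some q, rst WB ws [] ?f False) = w_try (rst WB ws [] ?f False) (deg v) (Suc q)"
    by (simp add: act_def aob_robot_def)
  then show ?thesis using run_trans[OF run_trans[OF down sub(1)] up] by fastforce
qed

lemma white_loop:
  assumes spec: "white_search_spec k" and v: "v \<in> V" and len: "length ws + Suc k = d1"
    and ports: "\<forall>p\<in>set ws. p \<le> Dl"
  shows "n = deg v - j \<Longrightarrow> fst c = v \<Longrightarrow> act c = w_try (rst M ws [] f False) (deg v) j \<Longrightarrow>
   \<exists>c' M'. run c (\<Sum>q\<in>free_ports (deg v) (top_port ws) j. 2 + search_moves k (nbr v q) (Some (bk v q))) c' \<and>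
     fst c' = v \<and> act c' = w_ret (rst M' ws []
       (f \<or> (\<exists>q\<in>free_ports (deg v) (top_port ws) j. found_white k (nbr v q) (Some (bk v q)))) False)"
proof (induction n arbitrary: j c M f rule: less_induct)
  case (less n)
  show ?case
  proof (cases "next_port (deg v) (top_port ws) j")
    case None
    then have "act c = w_ret (rst M ws [] f False)" using less.prems(3) w_try_None by simp
    then show ?thesis using less.prems(2) next_port_None[OF None] run_0
      by (intro exI[of _ c] exI[of _ M]) simp
  next
    case (Some q)
    note q = next_port_Some[OF Some]
    obtain c1 where c1: "run c (2 + search_moves k (nbr v q) (Some (bk v q))) c1" "fst c1 = v"
      "act c1 = w_try (rst WB ws [] (f \<or> found_white k (nbr v q) (Some (bk v q))) False) (deg v) (Suc q)"
      using white_child_round_trip[OF assms less.prems(2,3) Some] by blast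
    have "deg v - Suc q < n" using less.prems(1) q(1) by (simp add: free_ports_def, linarith)
    from less.IH[OF this refl c1(2,3)] obtain c' M' where rest:
      "run c1 (\<Sum>q'\<in>free_ports (deg v) (top_port ws) (Suc q). 2 + search_moves k (nbr v q') (Some (bk v q'))) c'"
      "fst c' = v" "act c' = w_ret (rst M' ws [] ((f \<or> found_white k (nbr v q) (Some (bk v q))) \<or>
         (\<exists>q'\<in>free_ports (deg v) (top_port ws) (Suc q). found_white k (nbr v q') (Some (bk v q')))) False)"
      by blast
    have sum_eq: "(\<Sum>q'\<in>free_ports (deg v) (top_port ws) j. 2 + search_moves k (nbr v q') (Some (bk v q'))) =
      (2 + search_moves k (nbr v q) (Some (bk v q))) +
      (\<Sum>q'\<in>free_ports (deg v) (top_port ws) (Suc q). 2 + search_moves k (nbr v q') (Some (bk v q')))"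
      using q(2,3) by simp
    have found_eq: "((f \<or> found_white k (nbr v q) (Some (bk v q))) \<or>
         (\<exists>q'\<in>free_ports (deg v) (top_port ws) (Suc q). found_white k (nbr v q') (Some (bk v q')))) =
      (f \<or> (\<exists>q'\<in>free_ports (deg v) (top_port ws) j. found_white k (nbr v q') (Some (bk v q'))))"
      using q(2) by auto
    show ?thesis
      unfolding sum_eq found_eq[symmetric] using run_trans[OF c1(1) rest(1)] rest(2,3) by blast
  qed
qed

lemma white_search_leaf:
  assumes v: "v \<in> V" and len: "length (push ip ws) = d1" and ports: "\<forall>p\<in>set ws. p \<le> Dl"
    and ip: "\<forall>p. ip = Some p \<longrightarrow> p < deg v"
  shows "\<exists>c' M'. run (v, ip, rst WF ws [] f False) (search_moves 0 v ip) c' \<and> fst c' = v \<and>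
     act c' = w_ret (rst M' (push ip ws) [] (f \<or> found_white 0 v ip) False)"
proof (cases "black v")
  case True
  then show ?thesis using len run_0
    by (intro exI[of _ "(v, ip, rst WF ws [] f False)"] exI[of _ WF]) (simp add: act_def aob_robot_def Let_def)
next
  case False
  let ?c = "(v, ip, rst WF ws [] f False)"
  have a: "act ?c = c_node d1 (rst WF (push ip ws) [] f False) (deg v) (black v)"
    using False len by (simp add: act_def aob_robot_def Let_def)
  have "\<forall>p\<in>set (push ip ws @ []). p \<le> Dl"
    using ports ip deg_le[OF v] by (auto simp: push_def split: option.splits)
  then obtain c2 M2 where c2: "run ?c (check_moves (d1 - 1) v None) c2" "fst c2 = v"
    "act c2 = c_ret (rst M2 (push ip ws) [] f (False \<or> black_within (d1 - 1) v None))"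
    using check_search[unfolded check_search_spec_def, rule_format, OF v _ a] len
    by (auto simp: top_port_def)
  then show ?thesis using False by (intro exI[of _ c2] exI[of _ M2]) simp
qed

lemma white_search: "white_search_spec k"
proof (induction k)
  case 0
  show ?case unfolding white_search_spec_def using white_search_leaf by simp
next
  case (Suc k)
  show ?case unfolding white_search_spec_def
  proof (intro allI impI)
    fix v ip ws f
    assume v: "v \<in> V" and len: "length (push ip ws) + Suc k = d1" and root: "ip = None \<longrightarrow> ws = []"
      and ports: "\<forall>p\<in>set ws. p \<le> Dl" and ip: "\<forall>p. ip = Some p \<longrightarrow> p < deg v"
    let ?c = "(v, ip, rst WF ws [] f False)"
    have nonroot: "(length (push ip ws) \<noteq> 0) = (ip \<noteq> None)" and tp: "top_port (push ip ws) = ip"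
      using root by (auto simp: push_def top_port_def split: option.splits)
    show "\<exists>c' M'. run ?c (search_moves (Suc k) v ip) c' \<and> fst c' = v \<and>
        act c' = w_ret (rst M' (push ip ws) [] (f \<or> found_white (Suc k) v ip) False)"
    proof (cases "black v \<and> ip \<noteq> None")
      case True
      then have "act ?c = w_ret (rst WF (push ip ws) [] (f \<or> found_white (Suc k) v ip) False)"
        using len nonroot by (simp add: act_def aob_robot_def Let_def)
      then show ?thesis using True run_0 by (intro exI[of _ ?c] exI[of _ WF]) simp
    next
      case False
      have a: "act ?c = w_try (rst WF (push ip ws) [] f False) (deg v) 0"
        using False len nonroot unfolding act_def aob_robot_def Let_def by auto
      have ports': "\<forall>p\<in>set (push ip ws). p \<le> Dl"
        using ports ip deg_le[OF v] by (auto simp: push_def split: option.splits)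
      have "search_moves (Suc k) v ip =
          (\<Sum>q\<in>free_ports (deg v) ip 0. 2 + search_moves k (nbr v q) (Some (bk v q)))"
        "found_white (Suc k) v ip = (\<exists>q\<in>free_ports (deg v) ip 0. found_white k (nbr v q) (Some (bk v q)))"
        by (simp_all only: search_moves.simps found_white.simps if_not_P[OF False])
      then show ?thesis using white_loop[OF Suc v len ports' refl _ a, unfolded tp] by simp

    qed
  qed
qed
end

section \<open>Number of moves\<close>

lemma sum_children_bound:
  fixes g :: "'a \<Rightarrow> nat"
  assumes "finite A" "card A \<le> D" "2 \<le> D" "4 \<le> Y" "\<And>x. x \<in> A \<Longrightarrow> g x + 4 \<le> Y"
  shows "(\<Sum>x\<in>A. 2 + g x) + 4 \<le> D * Y"
proof -
  have "(\<Sum>x\<in>A. 2 + g x) \<le> card A * (Y - 2)"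
    using sum_bounded_above[of A "\<lambda>x. 2 + g x" "Y - 2"] assms(5) by force
  also have "\<dots> \<le> D * (Y - 2)" using assms(2) by simp
  also have "\<dots> = D * Y - 2 * D" by (simp add: diff_mult_distrib2)
  finally show ?thesis using assms(3,4) mult_le_mono2[of 2 Y D] by linarith
qed

context A_or_B_robot
begin

lemma card_free_ports_le: "u \<in> V \<Longrightarrow> card (free_ports (deg u) ip 0) \<le> Dl"
  using card_mono[of "{..<deg u}" "free_ports (deg u) ip 0"] deg_le[of u]
  by (force simp: free_ports_def)

lemma check_moves_bound: "u \<in> V \<Longrightarrow> 2 \<le> Dl \<Longrightarrow> check_moves k u ip + 4 \<le> 4 * Dl ^ k"
proof (induction k arbitrary: u ip)
  case (Suc k)
  have pos: "1 \<le> Dl ^ k" using Suc.prems(2) by simp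
  show ?case
  proof (cases "black u")
    case False
    have "(\<Sum>q\<in>free_ports (deg u) ip 0. 2 + check_moves k (nbr u q) (Some (bk u q))) + 4 \<le> Dl * (4 * Dl ^ k)"
    proof (rule sum_children_bound)
      show "check_moves k (nbr u q) (Some (bk u q)) + 4 \<le> 4 * Dl ^ k" if "q \<in> free_ports (deg u) ip 0" for q
        using that Suc port_graph_edge by (auto simp: free_ports_def)
    qed (use Suc.prems card_free_ports_le pos in auto)
    then show ?thesis using False by simp
  qed (use pos Suc.prems(2) in simp)
qed simp

lemma search_moves_bound:
  "v \<in> V \<Longrightarrow> 2 \<le> Dl \<Longrightarrow> search_moves k v ip + 4 \<le> (4 * Dl ^ (d1 - 1) + 4) * Dl ^ k"
proof (induction k arbitrary: v ip)
  case 0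
  then show ?case using check_moves_bound[OF 0, of "d1 - 1" None] by simp
next
  case (Suc k)
  let ?K = "4 * Dl ^ (d1 - 1) + 4"
  have "?K * 1 \<le> ?K * Dl ^ k" using Suc.prems(2) by (intro mult_le_mono2) simp
  then have pos: "4 \<le> ?K * Dl ^ k" by (rule le_trans[rotated]) simp
  show ?case
  proof (cases "black v \<and> ip \<noteq> None")
    case False
    have "(\<Sum>q\<in>free_ports (deg v) ip 0. 2 + search_moves k (nbr v q) (Some (bk v q))) + 4 \<le> Dl * (?K * Dl ^ k)"
    proof (rule sum_children_bound)
      show "search_moves k (nbr v q) (Some (bk v q)) + 4 \<le> ?K * Dl ^ k" if "q \<in> free_ports (deg v) ip 0" for q
        using that Suc port_graph_edge by (auto simp: free_ports_def)
    qed (use Suc.prems card_free_ports_le pos in auto)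
    then show ?thesis using False by (simp add: mult.assoc mult.left_commute[of Dl])
  next
    case True
    have "?K * 1 \<le> ?K * Dl ^ Suc k" using Suc.prems(2) by (intro mult_le_mono2) simp
    then have "4 \<le> ?K * Dl ^ Suc k" by (rule le_trans[rotated]) simp
    then show ?thesis using True by simp
  qed
qed

lemma search_moves_le: "v \<in> V \<Longrightarrow> 2 \<le> Dl \<Longrightarrow> search_moves d1 v ip \<le> 8 * Dl ^ (2 * d1 - 1)"
proof -
  assume v: "v \<in> V" and Dl: "2 \<le> Dl"
  have "Dl ^ (d1 - 1) * Dl ^ d1 = Dl ^ (d1 - 1 + d1)" by (simp add: power_add)
  also have "d1 - 1 + d1 = 2 * d1 - 1" using two_le_d1 by simp
  finally have "Dl ^ (d1 - 1) * Dl ^ d1 = Dl ^ (2 * d1 - 1)" .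
  moreover have "Dl ^ d1 \<le> Dl ^ (2 * d1 - 1)" using Dl two_le_d1 by (intro power_increasing) auto
  ultimately show ?thesis
    using search_moves_bound[OF v Dl, of d1 ip] by (simp add: algebra_simps)
qed

fun white_walk :: "nat \<Rightarrow> nat list \<Rightarrow> bool" where
  "white_walk v [] = True"
| "white_walk v (p # ps) = (\<not> black (nbr v p) \<and> white_walk (nbr v p) ps)"

lemma black_within_walk:
  "u \<in> V \<Longrightarrow> black_within k u ip \<Longrightarrow> \<exists>ps z. length ps \<le> k \<and> walk u ps = Some z \<and> black z"
proof (induction k arbitrary: u ip)
  case (Suc k)
  show ?case
  proof (cases "black u")
    case False
    then obtain q where q: "q \<in> free_ports (deg u) ip 0" "black_within k (nbr u q) (Some (bk u q))"
      using Suc.prems by auto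
    have qd: "q < deg u" using q(1) by (simp add: free_ports_def)
    then obtain ps z where "length ps \<le> k" "walk (nbr u q) ps = Some z" "black z"
      using Suc.IH q(2) port_graph_edge[OF Suc.prems(1)] by blast
    then show ?thesis using qd by (intro exI[of _ "q # ps"]) auto
  qed (intro exI[of _ "[]"], simp)
qed (intro exI[of _ "[]"], simp)

lemma black_within_of_walk:
  "nonbacktracking u ip ps \<Longrightarrow> walk u ps = Some z \<Longrightarrow> black z \<Longrightarrow> length ps \<le> k \<Longrightarrow> black_within k u ip"
proof (induction ps arbitrary: u ip k)
  case (Cons p ps)
  then obtain k' where k: "k = Suc k'" by (cases k) auto
  with Cons have "black_within k' (nbr u p) (Some (bk u p))" by (auto split: if_splits)
  moreover have "p \<in> free_ports (deg u) ip 0" using Cons.prems(1) by (simp add: free_ports_def)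
  ultimately show ?case using k by auto
next
  case (Nil u ip k)
  then show ?case by (cases k) auto
qed

lemma found_white_walk:
  "found_white k v ip \<Longrightarrow> \<exists>ps w. length ps = k \<and> walk v ps = Some w \<and> white_walk v ps \<and>
     \<not> black w \<and> \<not> black_within (d1 - 1) w None"
proof (induction k arbitrary: v ip)
  case (Suc k)
  obtain q where q: "q \<in> free_ports (deg v) ip 0" "found_white k (nbr v q) (Some (bk v q))"
    using Suc.prems by (auto split: if_splits)
  have "\<not> black (nbr v q)" using q(2) by (cases k) auto
  moreover obtain ps w where "length ps = k" "walk (nbr v q) ps = Some w" "white_walk (nbr v q) ps"
    "\<not> black w" "\<not> black_within (d1 - 1) w None"
    using Suc.IH[OF q(2)] by blast
  ultimately show ?case using q(1) by (intro exI[of _ "q # ps"]) (auto simp: free_ports_def)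
qed (intro exI[of _ "[]"], simp)

lemma found_white_of_walk:
  "nonbacktracking v ip ps \<Longrightarrow> walk v ps = Some w \<Longrightarrow> white_walk v ps \<Longrightarrow> (ip \<noteq> None \<longrightarrow> \<not> black v) \<Longrightarrow>
     \<not> black w \<Longrightarrow> \<not> black_within (d1 - 1) w None \<Longrightarrow> found_white (length ps) v ip"
proof (induction ps arbitrary: v ip)
  case (Cons p ps)
  then have "p \<in> free_ports (deg v) ip 0" "found_white (length ps) (nbr v p) (Some (bk v p))"
    by (auto simp: free_ports_def)
  then show ?case using Cons.prems(4) by auto
qed simp

lemma geodesic_white_prefix:
  "v \<in> V \<Longrightarrow> geodesic v ps z \<Longrightarrow> j \<le> length ps \<Longrightarrow>
     (\<forall>y\<in>V. \<delta> v z - j \<le> \<delta> y z \<and> \<delta> y z < \<delta> v z \<longrightarrow> \<not> black y) \<Longrightarrow> white_walk v (take j ps)"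
proof (induction j arbitrary: v ps)
  case (Suc j)
  then obtain p ps' where ps: "ps = p # ps'" by (cases ps) auto
  with geodesic_Cons Suc.prems(2) have p: "p < deg v" and g: "geodesic (nbr v p) ps' z" by blast+
  have w: "nbr v p \<in> V" using port_graph_edge[OF Suc.prems(1) p] by blast
  have d: "\<delta> (nbr v p) z = \<delta> v z - 1" "length ps = \<delta> v z"
    using g Suc.prems(2) ps unfolding geodesic_def by auto
  have "\<forall>y\<in>V. \<delta> (nbr v p) z - j \<le> \<delta> y z \<and> \<delta> y z < \<delta> (nbr v p) z \<longrightarrow> \<not> black y"
    using Suc.prems(4) d by auto
  then have "white_walk (nbr v p) (take j ps')"
    using Suc.IH[OF w g] Suc.prems(3) ps by simp
  moreover have "\<not> black (nbr v p)" using Suc.prems(3,4) w d ps by auto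
  ultimately show ?case using ps by simp
qed simp

text \<open>Consecutive nodes of a walk have distances to r differing by at most one, so a white
  walk cannot jump over a black distance layer.\<close>
lemma white_walk_in_band:
  "r \<in> V \<Longrightarrow> v \<in> V \<Longrightarrow> walk v ps = Some w \<Longrightarrow> white_walk v ps \<Longrightarrow> ps \<noteq> [] \<Longrightarrow>
     a < \<delta> r v \<Longrightarrow> \<delta> r v \<le> a + d1 \<Longrightarrow> (\<forall>y\<in>V. \<delta> r y \<in> {a, a + d1, a + d1 + 1} \<longrightarrow> black y) \<Longrightarrow>
     a < \<delta> r w \<and> \<delta> r w < a + d1"
proof (induction ps arbitrary: v)
  case (Cons p ps)
  have p: "p < deg v" and w: "walk (nbr v p) ps = Some w" using Cons.prems(3) by (auto split: if_splits)
  have v': "nbr v p \<in> V" using port_graph_edge[OF Cons.prems(2) p] by blast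
  have "walk v [p] = Some (nbr v p)" using p by simp
  from dist_along_walk[OF Cons.prems(1,2) this]
  have "\<delta> r (nbr v p) \<le> \<delta> r v + 1" "\<delta> r v \<le> \<delta> r (nbr v p) + 1" by auto
  moreover have "\<delta> r (nbr v p) \<notin> {a, a + d1, a + d1 + 1}" using Cons.prems(4,8) v' by auto
  ultimately have band: "a < \<delta> r (nbr v p) \<and> \<delta> r (nbr v p) < a + d1" using Cons.prems(6,7) by auto
  show ?case
  proof (cases "ps = []")
    case True then show ?thesis using w band by simp
  next
    case False
    then show ?thesis using Cons.IH[OF Cons.prems(1) v' w] Cons.prems(4,8) band by auto
  qed
qed simp

text \<open>A node at distance at least 2 from r has a geodesic towards r whose second node is
  entered and left through different ports, so it has degree at least 2.\<close>
lemma two_le_degree_bound: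
  assumes r: "r \<in> V" and x: "x \<in> V" and far: "2 \<le> \<delta> r x"
  shows "2 \<le> Dl"
proof -
  obtain ps where g: "geodesic x ps r" using geodesic_exists[OF x r] by blast
  then obtain p0 p1 ps' where ps: "ps = p0 # p1 # ps'"
    using far dist_sym[OF r x] unfolding geodesic_def by (metis Suc_le_length_iff numeral_2_eq_2)
  have "nonbacktracking x None ps" using geodesic_nonbacktracking[OF x g] by simp
  then have "p0 < deg x" "p1 < deg (nbr x p0)" "p1 \<noteq> bk x p0" using ps by auto
  moreover note port_graph_edge[OF x \<open>p0 < deg x\<close>]
  ultimately show ?thesis using deg_le[of "nbr x p0"] by linarith
qed

lemma robot_exec_of_run:
  assumes run: "run (x, None, rinit) n c" and c: "fst c = x" and halt: "act c = (s, Halt res)"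
  shows "robot_exec deg nbr bk black (aob_robot d1) rinit x n x res"
    and "i \<le> n \<Longrightarrow> state_bits (snd (snd (robot_conf deg nbr bk black (aob_robot d1) rinit x i))) \<le> mem_bound"
proof -
  have conf: "robot_conf deg nbr bk black (aob_robot d1) rinit x i = (step ^^ i) (x, None, rinit)" for i
    unfolding robot_conf_def ..
  show "robot_exec deg nbr bk black (aob_robot d1) rinit x n x res"
    using run c halt unfolding robot_exec_def conf run_def legal_def act_def
    by (auto split: prod.splits)
  show "state_bits (snd (snd (robot_conf deg nbr bk black (aob_robot d1) rinit x i))) \<le> mem_bound"
    if "i \<le> n"
    using run that unfolding conf run_def
    by (cases "i = 0") (auto simp: rinit_def state_bits_def mem_bound_def)
qed

end

section \<open>Correctness under the AL labelling\<close>

locale al_search = A_or_B_robot V deg nbr bk "al_black deg nbr r d1 d2" d1 Dl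
  for V deg nbr bk r d1 d2 Dl +
  assumes root: "r \<in> V" and d2: "2 * d1 \<le> d2"
begin

lemma al_black_iff:
  "al_black deg nbr r d1 d2 y \<longleftrightarrow> \<delta> r y mod (d1 + d2 + 2) \<in> {0, 1, d2 + 1, d1 + d2 + 1}"
  by (auto simp: al_black_def inA_def inB_def inC_def inD_def al_q_def)

text \<open>Modulo d1 + d2 + 2, the white layers 2, ..., d2 lie between the D layer 1 and the A layer
  d2 + 1; as d2 \<ge> 2 d1 they include the 2 d1 - 1 layers just below an A node.\<close>
lemma white_near_A:
  assumes x: "\<delta> r x mod (d1 + d2 + 2) = d2 + 1" and y: "\<delta> r x < \<delta> r y + 2 * d1" "\<delta> r y < \<delta> r x"
  shows "\<not> al_black deg nbr r d1 d2 y"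
proof -
  define q where "q = d1 + d2 + 2"
  define M where "M = q * (\<delta> r x div q)"
  have L: "\<delta> r x = M + (d2 + 1)" using x div_mult_mod_eq[of "\<delta> r x" q] unfolding M_def q_def
    by (metis add.commute mult.commute)
  define s where "s = \<delta> r y - M"
  have s: "\<delta> r y = M + s" "2 \<le> s" "s \<le> d2" using L y d2 unfolding s_def by linarith+
  moreover have "s < q" using s(3) unfolding q_def by simp
  ultimately have "\<delta> r y mod q = s" unfolding M_def by simp
  then show ?thesis using s unfolding al_black_iff q_def by auto
qed

lemma black_rims_B:
  assumes x: "\<delta> r x mod (d1 + d2 + 2) = d1 + d2 + 1" and y: "\<delta> r y \<in> {\<delta> r x - d1, \<delta> r x, \<delta> r x + 1}"
  shows "al_black deg nbr r d1 d2 y"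
proof -
  define q where "q = d1 + d2 + 2"
  define M where "M = q * (\<delta> r x div q)"
  have L: "\<delta> r x = M + (d1 + d2 + 1)" using x div_mult_mod_eq[of "\<delta> r x" q] unfolding M_def q_def
    by (metis add.commute mult.commute)
  have "d2 + 1 < q" "d1 + d2 + 1 < q" unfolding q_def by simp_all
  then have "(M + (d2 + 1)) mod q = d2 + 1" "(M + (d1 + d2 + 1)) mod q = d1 + d2 + 1" "(M + q) mod q = 0"
    unfolding M_def by simp_all
  moreover have "\<delta> r y = M + (d2 + 1) \<or> \<delta> r y = M + (d1 + d2 + 1) \<or> \<delta> r y = M + q"
    using y L unfolding q_def by auto
  ultimately show ?thesis unfolding al_black_iff q_def by auto
qed

lemma found_white_if_A:
  assumes x: "x \<in> V" and xA: "\<delta> r x mod (d1 + d2 + 2) = d2 + 1"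
  shows "found_white d1 x None"
proof -
  let ?L = "\<delta> r x"
  have white: "\<not> al_black deg nbr r d1 d2 y" if "?L < \<delta> r y + 2 * d1" "\<delta> r y < ?L" for y
    using white_near_A[OF xA that] .
  have dL: "d1 < ?L" using xA d2 mod_less_eq_dividend[of ?L "d1 + d2 + 2"] by linarith
  obtain ps where g: "geodesic x ps r" using geodesic_exists[OF x root] by blast
  have len: "length ps = ?L" using g dist_sym[OF root x] unfolding geodesic_def by simp
  obtain w where w: "w \<in> V" "walk x (take d1 ps) = Some w" "geodesic w (drop d1 ps) r"
    using geodesic_take[OF x g, of d1] len dL by auto
  have rw: "\<delta> r w = ?L - d1" using w(3) len dist_sym[OF root w(1)] unfolding geodesic_def by simp
  have "nonbacktracking x None (take d1 ps)"
    by (rule nonbacktracking_take, rule geodesic_nonbacktracking[OF x g]) simp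
  moreover have "white_walk x (take d1 ps)"
  proof (rule geodesic_white_prefix[OF x g])
    show "d1 \<le> length ps" using len dL by simp
    show "\<forall>y\<in>V. \<delta> x r - d1 \<le> \<delta> y r \<and> \<delta> y r < \<delta> x r \<longrightarrow> \<not> al_black deg nbr r d1 d2 y"
    proof (intro ballI impI)
      fix y assume y: "y \<in> V" and near: "\<delta> x r - d1 \<le> \<delta> y r \<and> \<delta> y r < \<delta> x r"
      then have "?L < \<delta> r y + 2 * d1" "\<delta> r y < ?L"
        using dist_sym[OF root y] dist_sym[OF root x] two_le_d1 by linarith+
      then show "\<not> al_black deg nbr r d1 d2 y" by (rule white)
    qed
  qed
  moreover have "\<not> al_black deg nbr r d1 d2 w" using white rw dL two_le_d1 by simp
  moreover have "\<not> black_within (d1 - 1) w None"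
  proof
    assume "black_within (d1 - 1) w None"
    then obtain ps' z where z: "length ps' \<le> d1 - 1" "walk w ps' = Some z" "al_black deg nbr r d1 d2 z"
      using black_within_walk[OF w(1)] by blast
    have "\<delta> r z \<le> \<delta> r w + length ps'" "\<delta> r w \<le> \<delta> r z + length ps'"
      using dist_along_walk[OF root w(1) z(2)] by auto
    then show False using white[of z] z(1,3) rw dL two_le_d1 by linarith
  qed
  ultimately have "found_white (length (take d1 ps)) x None"
    using found_white_of_walk w(2) by blast
  then show ?thesis using len dL by simp
qed

lemma not_found_white_if_B:
  assumes x: "x \<in> V" and xB: "\<delta> r x mod (d1 + d2 + 2) = d1 + d2 + 1"
  shows "\<not> found_white d1 x None"
proof
  assume "found_white d1 x None"
  then obtain ps w where pw: "length ps = d1" "walk x ps = Some w" "white_walk x ps"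
    "\<not> black_within (d1 - 1) w None"
    using found_white_walk by blast
  let ?a = "\<delta> r x - d1"
  have dL: "d1 \<le> \<delta> r x" using xB mod_less_eq_dividend[of "\<delta> r x" "d1 + d2 + 2"] by linarith
  have rims: "\<forall>y\<in>V. \<delta> r y \<in> {?a, ?a + d1, ?a + d1 + 1} \<longrightarrow> al_black deg nbr r d1 d2 y"
    using black_rims_B[OF xB] dL by auto
  have "ps \<noteq> []" using pw(1) two_le_d1 by auto
  then have band: "?a < \<delta> r w \<and> \<delta> r w < ?a + d1"
    by (rule white_walk_in_band[OF root x pw(2,3) _ _ _ rims]) (use dL two_le_d1 in auto)
  have wV: "w \<in> V" using walk_in_V[OF x pw(2)] .
  obtain qs where g: "geodesic w qs r" using geodesic_exists[OF wV root] by blast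
  have len: "length qs = \<delta> r w" using g dist_sym[OF root wV] unfolding geodesic_def by simp
  obtain y where y: "y \<in> V" "walk w (take (\<delta> r w - ?a) qs) = Some y" "geodesic y (drop (\<delta> r w - ?a) qs) r"
    using geodesic_take[OF wV g, of "\<delta> r w - ?a"] len by auto
  have "\<delta> r y = ?a" using y(3) len band dist_sym[OF root y(1)] unfolding geodesic_def by simp
  then have "al_black deg nbr r d1 d2 y" using rims y(1) by simp
  moreover have "nonbacktracking w None (take (\<delta> r w - ?a) qs)"
    by (rule nonbacktracking_take, rule geodesic_nonbacktracking[OF wV g]) simp
  ultimately have "black_within (d1 - 1) w None"
    by (intro black_within_of_walk[OF _ y(2)]) (use len band in auto)
  then show False using pw(4) by contradiction
qed

lemma two_le_Dl:
  assumes "x \<in> V" "inA deg nbr r d1 d2 x \<or> inB deg nbr r d1 d2 x"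
  shows "2 \<le> Dl"
proof (rule two_le_degree_bound[OF root assms(1)])
  have "d2 + 1 \<le> \<delta> r x mod al_q d1 d2" using assms(2) unfolding inA_def inB_def by auto
  then show "2 \<le> \<delta> r x" using d2 two_le_d1 mod_less_eq_dividend[of "\<delta> r x" "al_q d1 d2"] by linarith
qed

theorem A_or_B_correct:
  assumes x: "x \<in> V" and AB: "inA deg nbr r d1 d2 x \<or> inB deg nbr r d1 d2 x"
  shows "\<exists>n. robot_exec deg nbr bk (al_black deg nbr r d1 d2) (aob_robot d1) rinit x n x
      (if inB deg nbr r d1 d2 x then AnsB else AnsA) \<and> n \<le> 8 * Dl ^ (2 * d1 - 1) \<and>
    (\<forall>i\<le>n. state_bits (snd (snd (robot_conf deg nbr bk (al_black deg nbr r d1 d2) (aob_robot d1) rinit x i)))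
      \<le> mem_bound)"
proof -
  let ?found = "found_white d1 x None"
  obtain c M where c: "run (x, None, rinit) (search_moves d1 x None) c" "fst c = x"
    "act c = (rst M [] [] ?found False, Halt (if ?found then AnsA else AnsB))"
    using white_search[of d1, unfolded white_search_spec_def, rule_format, of x None "[]" False] x
    by (auto simp: push_def rinit_def)
  have "(if ?found then AnsA else AnsB) = (if inB deg nbr r d1 d2 x then AnsB else AnsA)"
    using AB found_white_if_A[OF x] not_found_white_if_B[OF x]
    unfolding inA_def inB_def al_q_def by auto
  then show ?thesis
    using robot_exec_of_run[OF c] search_moves_le[OF x two_le_Dl[OF x AB]]
    by (intro exI[of _ "search_moves d1 x None"]) simp
qed

end

section \<open>Memory\<close>

lemma two_pow_bitlen_le: "1 \<le> n \<Longrightarrow> 2 ^ bitlen n \<le> 2 * n"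
proof (induction n rule: less_induct)
  case (less n)
  show ?case
  proof (cases "n < 2")
    case False
    then have "2 ^ bitlen (n div 2) \<le> 2 * (n div 2)" using less.IH[of "n div 2"] by simp
    then show ?thesis using False by (simp add: bitlen.simps[of n])
  qed (use less.prems in \<open>simp add: bitlen.simps[of n]\<close>)
qed

lemma bitlen_le_log: "2 \<le> n \<Longrightarrow> real (bitlen n) \<le> 2 * log 2 (real n)"
proof -
  assume n: "2 \<le> n"
  have "real (bitlen n) \<le> log 2 (real (2 * n))"
    using le_log2_of_power[OF two_pow_bitlen_le[of n]] n by simp
  also have "\<dots> = 1 + log 2 (real n)" using n by (simp add: log_mult)
  moreover have "1 \<le> log 2 (real n)" using le_log2_of_power[of 1 n] n by simp
  ultimately show ?thesis by linarith
qed

lemma memory_le_log: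
  assumes "2 \<le> D" "2 \<le> d"
  shows "real (6 + 4 * d * bitlen D) \<le> 11 * real d * log 2 (real D)"
proof -
  define l where "l = log 2 (real D)"
  have "1 \<le> l" using le_log2_of_power[of 1 D] assms(1) unfolding l_def by simp
  then have "2 \<le> real d * l" using assms(2) mult_mono[of 2 "real d" 1 l] by simp
  moreover have "real d * real (bitlen D) \<le> real d * (2 * l)"
    using bitlen_le_log[OF assms(1)] unfolding l_def by (intro mult_left_mono) auto
  ultimately show ?thesis by (simp add: l_def[symmetric] algebra_simps)
qed

corollary A_or_B_complexity:
  assumes G: "port_graph V deg nbr bk" "connected_pg V deg nbr" and L: "al_labeling V deg nbr r d1 d2"
    and x: "x \<in> V" and AB: "inA deg nbr r d1 d2 x \<or> inB deg nbr r d1 d2 x"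
  shows "\<exists>n. robot_exec deg nbr bk (al_black deg nbr r d1 d2) (aob_robot d1) rinit x n x
      (if inB deg nbr r d1 d2 x then AnsB else AnsA) \<and>
    real n \<le> 11 * real (max_degree V deg) ^ (2 * d1 - 1) \<and>
    (\<forall>i\<le>n. real (state_bits (snd (snd (robot_conf deg nbr bk (al_black deg nbr r d1 d2) (aob_robot d1) rinit x i))))
      \<le> 11 * real d1 * log 2 (real (max_degree V deg)))"
proof -
  let ?D = "max_degree V deg"
  have "finite V" using G(1) unfolding port_graph_def by blast
  interpret al_search V deg nbr bk r d1 d2 ?D
    by unfold_locales (use G L \<open>finite V\<close> in \<open>auto simp: al_labeling_def max_degree_def\<close>)
  obtain n where n: "robot_exec deg nbr bk (al_black deg nbr r d1 d2) (aob_robot d1) rinit x n x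
      (if inB deg nbr r d1 d2 x then AnsB else AnsA)" "n \<le> 8 * ?D ^ (2 * d1 - 1)"
    "\<forall>i\<le>n. state_bits (snd (snd (robot_conf deg nbr bk (al_black deg nbr r d1 d2) (aob_robot d1) rinit x i)))
      \<le> mem_bound"
    using A_or_B_correct[OF x AB] by blast
  have "real n \<le> 8 * real ?D ^ (2 * d1 - 1)" using n(2) by (metis of_nat_le_iff of_nat_mult of_nat_numeral of_nat_power)
  then have "real n \<le> 11 * real ?D ^ (2 * d1 - 1)" by simp
  moreover have "real mem_bound \<le> 11 * real d1 * log 2 (real ?D)"
    unfolding mem_bound_def using memory_le_log two_le_Dl[OF x AB] two_le_d1 by blast
  ultimately show ?thesis using n(1,3) by (meson of_nat_le_iff order_trans)
qed

theorem lemma4: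
  "\<exists>c::real. \<forall>(V::nat set) deg nbr back r d1 d2 x.
     port_graph V deg nbr back \<and> connected_pg V deg nbr \<and> al_labeling V deg nbr r d1 d2 \<and>
     x \<in> V \<and> (inA deg nbr r d1 d2 x \<or> inB deg nbr r d1 d2 x) \<longrightarrow>
     (\<exists>n res. robot_exec deg nbr back (al_black deg nbr r d1 d2) (aob_robot d1) rinit x n x res \<and>
        res = (if inB deg nbr r d1 d2 x then AnsB else AnsA) \<and>
        real n \<le> c * real (max_degree V deg) ^ (2 * d1 - 1) \<and>
        (\<forall>i\<le>n. real (state_bits (snd (snd
            (robot_conf deg nbr back (al_black deg nbr r d1 d2) (aob_robot d1) rinit x i))))
          \<le> c * real d1 * log 2 (real (max_degree V deg))))"
  using A_or_B_complexity by (intro exI[of _ "11::real"] allI impI) blast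

end
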